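(* Let $X$ be a smooth projective split toric variety over $\mathbb{Q}$ with $-K_X$ globally generated, of dimension $d$, with $r=\operatorname{rank}\operatorname{Pic}(X)$. For every fixed $A>0$, as $B\to\infty$, $$\#\big(\mathcal{A}(B)\setminus\mathcal{A}^{(A)\flat}(B)\big)=O_A\big(B(\log B)^{r-2}\log\log B\big).$$
   Context: $X$ is defined by a complete regular fan $\Delta$ in $N_\mathbb{R}$, $N\cong\mathbb{Z}^d$, $M=\operatorname{Hom}(N,\mathbb{Z})$; $\Delta(1)$ is the set of rays, $n=\#\Delta(1)=r+d$, $n_\rho$ the primitive generator of $\rho$, $\Delta_{\max}$ the set of maximal cones, $\sigma(1)$ the rays of $\sigma$. For $\sigma\in\Delta_{\max}$, $\{n_\rho:\rho\in\sigma(1)\}$ is a basis of $N$; let $m_\sigma\in M$ be the unique element with $\langle m_\sigma,n_\rho\rangle=1$ for all $\rho\in\sigma(1)$, and $a_\rho(\sigma)=1-\langle m_\sigma,n_\rho\rangle$ (which is $\ge0$). For $\mathbf{X}=(X_\rho)_{\rho\in\Delta(1)}$ with positive entries, $\mathbf{X}^{D_0(\sigma)}=\prod_\rho X_\rho^{a_\rho(\sigma)}$. Let $\mathcal{A}(B)=\{\mathbf{X}\in\mathbb{Z}_{\ge1}^{\Delta(1)}:\max_{\sigma\in\Delta_{\max}}\mathbf{X}^{D_0(\sigma)}\le B\}$. For $\sigma\in\Delta_{\max}$ and $\rho'\in\sigma(1)$, let $n^\vee_{\sigma,\rho'}\in M$ be the element of the dual basis with $\langle n^\vee_{\sigma,\rho'},n_\rho\rangle=\delta_{\rho\rho'}$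 for $\rho\in\sigma(1)$, and $\mathbf{X}^{E_\sigma(\rho')}=\prod_{\rho\notin\sigma(1)}X_\rho^{-\langle n^\vee_{\sigma,\rho'},n_\rho\rangle}$. Then $\mathcal{A}^{(A)\flat}(B)=\{\mathbf{X}\in\mathcal{A}(B):\mathbf{X}^{E_\sigma(\rho')}\ge(\log B)^A\text{ for all }\sigma\in\Delta_{\max},\rho'\in\sigma(1)\}$. *)

theory Defs
  imports "HOL-Analysis.Analysis" "HOL-Library.Landau_Symbols"
begin

text \<open>
  N = Z^d is rendered as int^'d (the dimension d = CARD('d)),
  M = Hom(N,Z) is identified with int^'d via the standard pairing.
  The rays Delta(1) are indexed by the elements of a finite type 'r,
  nv rho is the primitive generator n_rho, and Smax is the set of maximal
  cones, each given by its set of rays sigma(1) (a subset of 'r).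
\<close>

definition pair :: "int^'d \<Rightarrow> int^'d \<Rightarrow> int" where
  "pair m v = (\<Sum>i\<in>UNIV. m $ i * v $ i)"

definition realv :: "int^'d \<Rightarrow> real^'d" where
  "realv v = (\<chi> i. real_of_int (v $ i))"

definition cone_of :: "('r \<Rightarrow> int^'d) \<Rightarrow> 'r set \<Rightarrow> (real^'d) set" where
  "cone_of nv S = {(\<Sum>\<rho>\<in>S. c \<rho> *\<^sub>R realv (nv \<rho>)) | c. \<forall>\<rho>\<in>S. c \<rho> \<ge> 0}"

definition is_Z_basis :: "('r \<Rightarrow> int^'d) \<Rightarrow> 'r set \<Rightarrow> bool" where
  "is_Z_basis nv \<sigma> \<longleftrightarrow> card \<sigma> = CARD('d) \<and>
     (\<forall>v::int^'d. \<exists>!c::'r \<Rightarrow> int. (\<forall>\<rho>. \<rho> \<notin> \<sigma> \<longrightarrow> c \<rho> = 0) \<and>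
          v = (\<Sum>\<rho>\<in>\<sigma>. c \<rho> *s nv \<rho>))"

text \<open>For simplicial cones the fan
  axiom (intersection of two cones is a face of each) is equivalent to
  cone(sigma) \<inter> cone(tau) = cone(sigma \<inter> tau).\<close>
definition complete_regular_fan :: "('r::finite \<Rightarrow> int^'d) \<Rightarrow> 'r set set \<Rightarrow> bool" where
  "complete_regular_fan nv Smax \<longleftrightarrow>
     inj nv \<and>
     (\<forall>\<sigma>\<in>Smax. is_Z_basis nv \<sigma>) \<and>
     (\<forall>\<sigma>\<in>Smax. \<forall>\<tau>\<in>Smax. cone_of nv \<sigma> \<inter> cone_of nv \<tau> = cone_of nv (\<sigma> \<inter> \<tau>)) \<and>
     (\<forall>\<rho>. \<exists>\<sigma>\<in>Smax. \<rho> \<in> \<sigma>) \<and>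
     (\<Union>\<sigma>\<in>Smax. cone_of nv \<sigma>) = UNIV"

text \<open>Projectivity: existence of a strictly convex piecewise linear support
  function (equivalently an ample T-invariant Cartier divisor).\<close>
definition projective_fan :: "('r::finite \<Rightarrow> int^'d) \<Rightarrow> 'r set set \<Rightarrow> bool" where
  "projective_fan nv Smax \<longleftrightarrow>
     (\<exists>h::'r \<Rightarrow> int. \<forall>\<sigma>\<in>Smax. \<exists>m::int^'d.
        (\<forall>\<rho>\<in>\<sigma>. pair m (nv \<rho>) = h \<rho>) \<and> (\<forall>\<rho>. \<rho> \<notin> \<sigma> \<longrightarrow> pair m (nv \<rho>) < h \<rho>))"

definition m_sigma :: "('r \<Rightarrow> int^'d) \<Rightarrow> 'r set \<Rightarrow> int^'d" where
  "m_sigma nv \<sigma> = (THE m. \<forall>\<rho>\<in>\<sigma>. pair m (nv \<rho>) = 1)"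

definition a_coef :: "('r \<Rightarrow> int^'d) \<Rightarrow> 'r set \<Rightarrow> 'r \<Rightarrow> int" where
  "a_coef nv \<sigma> \<rho> = 1 - pair (m_sigma nv \<sigma>) (nv \<rho>)"

definition antican_globally_generated :: "('r \<Rightarrow> int^'d) \<Rightarrow> 'r set set \<Rightarrow> bool" where
  "antican_globally_generated nv Smax \<longleftrightarrow> (\<forall>\<sigma>\<in>Smax. \<forall>\<rho>. a_coef nv \<sigma> \<rho> \<ge> 0)"

definition dual_elt :: "('r \<Rightarrow> int^'d) \<Rightarrow> 'r set \<Rightarrow> 'r \<Rightarrow> int^'d" where
  "dual_elt nv \<sigma> \<rho>' = (THE m. \<forall>\<rho>\<in>\<sigma>. pair m (nv \<rho>) = (if \<rho> = \<rho>' then 1 else 0))"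

definition XD0 :: "('r::finite \<Rightarrow> int^'d) \<Rightarrow> 'r set \<Rightarrow> ('r \<Rightarrow> nat) \<Rightarrow> real" where
  "XD0 nv \<sigma> X = (\<Prod>\<rho>\<in>UNIV. real (X \<rho>) powr real_of_int (a_coef nv \<sigma> \<rho>))"

definition XE :: "('r::finite \<Rightarrow> int^'d) \<Rightarrow> 'r set \<Rightarrow> 'r \<Rightarrow> ('r \<Rightarrow> nat) \<Rightarrow> real" where
  "XE nv \<sigma> \<rho>' X = (\<Prod>\<rho>\<in>UNIV - \<sigma>. real (X \<rho>) powr real_of_int (- pair (dual_elt nv \<sigma> \<rho>') (nv \<rho>)))"

definition Acal :: "('r::finite \<Rightarrow> int^'d) \<Rightarrow> 'r set set \<Rightarrow> real \<Rightarrow> ('r \<Rightarrow> nat) set" where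
  "Acal nv Smax B = {X. (\<forall>\<rho>. X \<rho> \<ge> 1) \<and> Max ((\<lambda>\<sigma>. XD0 nv \<sigma> X) ` Smax) \<le> B}"

definition Aflat :: "('r::finite \<Rightarrow> int^'d) \<Rightarrow> 'r set set \<Rightarrow> real \<Rightarrow> real \<Rightarrow> ('r \<Rightarrow> nat) set" where
  "Aflat nv Smax A B = {X \<in> Acal nv Smax B.
      \<forall>\<sigma>\<in>Smax. \<forall>\<rho>'\<in>\<sigma>. XE nv \<sigma> \<rho>' X \<ge> (ln B) powr A}"

definition pic_rank :: "('r::finite \<Rightarrow> int^'d) \<Rightarrow> nat" where
  "pic_rank nv = CARD('r) - CARD('d)"

end

theory Submission
  imports Defs "HOL-Library.Discrete_Functions" "HOL-Real_Asymp.Real_Asymp"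
begin

text \<open>
  Split \<open>\<A>(B)\<close> into dyadic boxes \<open>2^k \<le> X < 2^(k+1)\<close>.  Because the fan is complete, every
  exponent vector \<open>k\<close> can be completed to a relation \<open>w = k + c\<close> among the rays
  (\<open>\<Sum> w_\<rho> n_\<rho> = 0\<close>) with \<open>c\<close> supported on a single maximal cone.  For a relation,
  \<open>\<Sum> a_\<rho>(\<sigma>) w_\<rho> = \<Sum> w_\<rho>\<close> for every \<open>\<sigma>\<close>, so the height bound gives
  \<open>\<Sum> k + \<Sum> c \<le> log_2 B\<close>, while \<open>X^E_\<sigma>(\<rho>') < (log B)^A\<close> forces
  \<open>w_\<rho>' = \<Sum> E_\<rho> w_\<rho> \<le> A log_2 log B + O(1 + \<Sum> c)\<close>.

  If the exponent vectors of \<open>D_0(\<sigma>)\<close> and \<open>E_\<sigma>(\<rho>')\<close> have a nonvanishing \<open>2 \<times> 2\<close> minor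
  at rays \<open>i, j\<close>, a relation is determined by \<open>\<Sum> w\<close>, \<open>w_\<rho>'\<close> and its \<open>r - 2\<close>
  coordinates off \<open>\<sigma> \<union> {i, j}\<close>; summing \<open>2^(\<Sum> k) = 2^(\<Sum> w) / 2^(\<Sum> c)\<close> over these
  data gives \<open>O(B (log B)^(r-2) log log B)\<close>.  Otherwise \<open>E_\<sigma>(\<rho>') = \<mu> D_0(\<sigma>)\<close> with
  \<open>\<mu> > 0\<close>, the condition bounds \<open>X^D_0(\<sigma>)\<close> by a power of \<open>log B\<close>, and the count saves
  a power of \<open>B\<close>.
\<close>

section \<open>Dual bases in the lattice\<close>

lemma pair_sum_right: "pair m (\<Sum>i\<in>S. f i) = (\<Sum>i\<in>S. pair m (f i))"
  unfolding pair_def by (simp add: sum_component sum_distrib_left) (rule sum.swap)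

lemma pair_scale_right: "pair m (c *s v) = c * pair m v"
  unfolding pair_def by (simp add: sum_distrib_left algebra_simps)

lemma pair_zero_right [simp]: "pair m 0 = 0"
  by (simp add: pair_def)

lemma pair_axis: "pair m (axis i 1) = m $ i"
  unfolding pair_def axis_def by (simp add: if_distrib cong: if_cong)

lemma vec_eq_sum_axis: "(v::int^'d) = (\<Sum>i\<in>UNIV. v $ i *s axis i 1)"
  by (simp add: vec_eq_iff sum_component axis_def if_distrib cong: if_cong)

lemma le_sum_UNIV: "(f::'a::finite \<Rightarrow> nat) x \<le> sum f UNIV"
  by (rule member_le_sum) auto

lemma sum_UNIV_split: "sum g (UNIV::'a::finite set) = sum g S + sum g (UNIV - S)"
  by (metis add.commute finite subset_UNIV sum.subset_diff)

lemma Z_basis_coordinates: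
  fixes nv :: "'r::finite \<Rightarrow> int^'d"
  assumes "is_Z_basis nv \<sigma>"
  obtains coef :: "'d \<Rightarrow> 'r \<Rightarrow> int"
  where "\<And>i \<rho>. \<rho> \<notin> \<sigma> \<Longrightarrow> coef i \<rho> = 0"
    and "\<And>i. (axis i 1 :: int^'d) = (\<Sum>\<rho>\<in>\<sigma>. coef i \<rho> *s nv \<rho>)"
proof -
  have "\<forall>i. \<exists>c. (\<forall>\<rho>. \<rho> \<notin> \<sigma> \<longrightarrow> c \<rho> = 0) \<and> (axis i 1 :: int^'d) = (\<Sum>\<rho>\<in>\<sigma>. c \<rho> *s nv \<rho>)"
    using assms unfolding is_Z_basis_def by blast
  then show ?thesis using that by metis
qed

text \<open>Expanding \<open>nv \<rho>\<close> in the standard basis and then in the basis \<open>\<sigma>\<close> must return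
  the trivial expansion, by uniqueness of coordinates.\<close>
lemma Z_basis_coordinates_inverse:
  fixes nv :: "'r::finite \<Rightarrow> int^'d"
  assumes basis: "is_Z_basis nv \<sigma>" and "\<rho> \<in> \<sigma>"
    and coef0: "\<And>i \<rho>. \<rho> \<notin> \<sigma> \<Longrightarrow> coef i \<rho> = 0"
    and coef: "\<And>i. (axis i 1 :: int^'d) = (\<Sum>\<rho>\<in>\<sigma>. coef i \<rho> *s nv \<rho>)"
  shows "(\<Sum>i\<in>UNIV. nv \<rho> $ i * coef i \<tau>) = (if \<tau> = \<rho> then 1 else 0)"
proof -
  define c1 where "c1 \<tau> = (if \<tau> = \<rho> then 1 else (0::int))" for \<tau>
  define c2 where "c2 \<tau> = (\<Sum>i\<in>UNIV. nv \<rho> $ i * coef i \<tau>)" for \<tau>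
  have "(\<Sum>\<tau>\<in>\<sigma>. c1 \<tau> *s nv \<tau>) = (\<Sum>\<tau>\<in>\<sigma>. if \<tau> = \<rho> then nv \<tau> else 0)"
    by (rule sum.cong) (auto simp: c1_def)
  then have c1: "(\<Sum>\<tau>\<in>\<sigma>. c1 \<tau> *s nv \<tau>) = nv \<rho>"
    using \<open>\<rho> \<in> \<sigma>\<close> by (simp add: sum.delta')
  have "(\<Sum>\<tau>\<in>\<sigma>. c2 \<tau> *s nv \<tau>) = (\<Sum>\<tau>\<in>\<sigma>. \<Sum>i\<in>UNIV. (nv \<rho> $ i * coef i \<tau>) *s nv \<tau>)"
    unfolding c2_def by (simp add: vec_eq_iff sum_component sum_distrib_right)
  also have "\<dots> = (\<Sum>i\<in>UNIV. nv \<rho> $ i *s (\<Sum>\<tau>\<in>\<sigma>. coef i \<tau> *s nv \<tau>))"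
    by (subst sum.swap) (simp add: vec_eq_iff sum_component sum_distrib_left mult.assoc)
  also have "\<dots> = nv \<rho>"
    by (simp flip: coef vec_eq_sum_axis)
  finally have c2: "(\<Sum>\<tau>\<in>\<sigma>. c2 \<tau> *s nv \<tau>) = nv \<rho>" .
  have "\<forall>\<tau>. \<tau> \<notin> \<sigma> \<longrightarrow> c1 \<tau> = 0" "\<forall>\<tau>. \<tau> \<notin> \<sigma> \<longrightarrow> c2 \<tau> = 0"
    using \<open>\<rho> \<in> \<sigma>\<close> coef0 by (auto simp: c1_def c2_def)
  with c1 c2 have "c1 = c2"
    using basis unfolding is_Z_basis_def by metis
  then show ?thesis by (metis c1_def c2_def)
qed

lemma Z_basis_ex1_dual:
  fixes nv :: "'r::finite \<Rightarrow> int^'d"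
  assumes basis: "is_Z_basis nv \<sigma>"
  shows "\<exists>!m. \<forall>\<rho>\<in>\<sigma>. pair m (nv \<rho>) = t \<rho>"
proof -
  obtain coef where coef0: "\<And>i \<rho>. \<rho> \<notin> \<sigma> \<Longrightarrow> coef i \<rho> = 0"
    and coef: "\<And>i. (axis i 1 :: int^'d) = (\<Sum>\<rho>\<in>\<sigma>. coef i \<rho> *s nv \<rho>)"
    using Z_basis_coordinates[OF basis] by blast
  define m where "m = (\<chi> i. \<Sum>\<tau>\<in>\<sigma>. coef i \<tau> * t \<tau>)"
  have "pair m (nv \<rho>) = t \<rho>" if "\<rho> \<in> \<sigma>" for \<rho>
  proof -
    have "pair m (nv \<rho>) = (\<Sum>i\<in>UNIV. \<Sum>\<tau>\<in>\<sigma>. t \<tau> * (nv \<rho> $ i * coef i \<tau>))"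
      unfolding pair_def m_def by (simp add: sum_distrib_left mult_ac)
    also have "\<dots> = (\<Sum>\<tau>\<in>\<sigma>. t \<tau> * (\<Sum>i\<in>UNIV. nv \<rho> $ i * coef i \<tau>))"
      by (subst sum.swap) (simp add: sum_distrib_left)
    finally show ?thesis
      using that Z_basis_coordinates_inverse[OF basis that coef0 coef]
      by (simp add: if_distrib cong: if_cong)
  qed
  moreover have "m' $ i = (\<Sum>\<tau>\<in>\<sigma>. coef i \<tau> * t \<tau>)" if "\<forall>\<rho>\<in>\<sigma>. pair m' (nv \<rho>) = t \<rho>" for m' i
    using that pair_axis[of m' i] by (simp add: coef pair_sum_right pair_scale_right)
  ultimately show ?thesis
    unfolding m_def by (intro ex1I[of _ m]) (auto simp: vec_eq_iff m_def)
qed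

section \<open>Exponent vectors and relations among the rays\<close>

definition ray_comb :: "('r::finite \<Rightarrow> int^'d) \<Rightarrow> ('r \<Rightarrow> nat) \<Rightarrow> int^'d" where
  "ray_comb nv k = (\<Sum>\<rho>\<in>UNIV. int (k \<rho>) *s nv \<rho>)"

definition dot :: "('r::finite \<Rightarrow> int) \<Rightarrow> ('r \<Rightarrow> nat) \<Rightarrow> int" where
  "dot c k = (\<Sum>\<rho>\<in>UNIV. c \<rho> * int (k \<rho>))"

text \<open>The exponents of \<open>X^{E_\<sigma>(\<rho>')}\<close>, extended by zero to the rays of \<open>\<sigma>\<close>.\<close>
definition E_coef :: "('r \<Rightarrow> int^'d) \<Rightarrow> 'r set \<Rightarrow> 'r \<Rightarrow> 'r \<Rightarrow> int" where
  "E_coef nv \<sigma> \<rho>' \<rho> = (if \<rho> \<in> \<sigma> then 0 else - pair (dual_elt nv \<sigma> \<rho>') (nv \<rho>))"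

lemma ray_comb_add: "ray_comb nv (\<lambda>\<rho>. k \<rho> + l \<rho>) = ray_comb nv k + ray_comb nv l"
  unfolding ray_comb_def by (simp add: vector_sadd_rdistrib sum.distrib)

lemma pair_ray_comb: "pair m (ray_comb nv k) = dot (\<lambda>\<rho>. pair m (nv \<rho>)) k"
  unfolding ray_comb_def dot_def pair_sum_right pair_scale_right by (simp add: mult.commute)

lemma dot_add: "dot c (\<lambda>\<rho>. k \<rho> + l \<rho>) = dot c k + dot c l"
  unfolding dot_def by (simp add: sum.distrib algebra_simps)

lemma dot_cong: "(\<And>\<rho>. c \<rho> \<noteq> 0 \<Longrightarrow> k \<rho> = l \<rho>) \<Longrightarrow> dot c k = dot c l"
  unfolding dot_def by (rule sum.cong) auto

lemma dot_zero_right [simp]: "dot c (\<lambda>_. 0) = 0"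
  by (simp add: dot_def)

lemma dot_le_mult_sum: "(\<And>\<rho>. c \<rho> \<le> \<alpha>) \<Longrightarrow> dot c k \<le> \<alpha> * int (sum k UNIV)"
  unfolding dot_def by (simp add: sum_distrib_left) (intro sum_mono mult_right_mono, auto)

lemma dot_diff_two_support:
  assumes "i \<noteq> j" and "\<And>\<rho>. \<rho> \<noteq> i \<Longrightarrow> \<rho> \<noteq> j \<Longrightarrow> c \<rho> = 0 \<or> k \<rho> = l \<rho>"
  shows "dot c k - dot c l = c i * (int (k i) - int (l i)) + c j * (int (k j) - int (l j))"
proof -
  have "dot c k - dot c l = (\<Sum>\<rho>\<in>UNIV. c \<rho> * (int (k \<rho>) - int (l \<rho>)))"
    unfolding dot_def by (simp add: sum_subtractf algebra_simps)
  also have "\<dots> = (\<Sum>\<rho>\<in>{i, j}. c \<rho> * (int (k \<rho>) - int (l \<rho>)))"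
    by (rule sum.mono_neutral_right) (use assms(2) in auto)
  finally show ?thesis using assms(1) by simp
qed

lemma dot_a_coef_relation:
  "ray_comb nv w = 0 \<Longrightarrow> dot (a_coef nv \<sigma>) w = int (sum w UNIV)"
  using pair_ray_comb[of "m_sigma nv \<sigma>" nv w]
  unfolding dot_def a_coef_def by (simp add: algebra_simps sum_subtractf)

lemma minor_nonzero_or_proportional:
  fixes a e :: "'r::finite \<Rightarrow> int"
  assumes "dot a w > 0" and "dot e w > 0"
  shows "(\<exists>i j. a i * e j \<noteq> a j * e i) \<or> (\<exists>\<mu>>0. \<forall>\<rho>. real_of_int (e \<rho>) = \<mu> * real_of_int (a \<rho>))"
proof (cases "\<exists>i j. a i * e j \<noteq> a j * e i")
  case False
  then have minors: "real_of_int (a i) * real_of_int (e j) = real_of_int (a j) * real_of_int (e i)" for i j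
    by (metis of_int_mult)
  have "\<exists>i. a i \<noteq> 0"
  proof (rule ccontr)
    assume "\<nexists>i. a i \<noteq> 0"
    then have "dot a w = 0" by (simp add: dot_def)
    with assms(1) show False by simp
  qed
  then obtain i where "a i \<noteq> 0" by blast
  define \<mu> where "\<mu> = real_of_int (e i) / real_of_int (a i)"
  have proportional: "real_of_int (e \<rho>) = \<mu> * real_of_int (a \<rho>)" for \<rho>
    using minors[of i \<rho>] \<open>a i \<noteq> 0\<close> unfolding \<mu>_def by (simp add: field_simps)
  have "real_of_int (dot e w) = \<mu> * real_of_int (dot a w)"
    unfolding dot_def by (simp add: proportional sum_distrib_left mult_ac)
  with assms(2) have "0 < \<mu> * real_of_int (dot a w)" by simp
  moreover have "0 < real_of_int (dot a w)" using assms(1) by simp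
  ultimately have "\<mu> > 0" by (simp add: zero_less_mult_iff)
  with proportional show ?thesis by blast
qed blast

lemma linear_system_2x2_trivial:
  fixes a1 a2 e1 e2 x y :: int
  assumes "a1 * x + a2 * y = 0" and "e1 * x + e2 * y = 0" and "a1 * e2 \<noteq> a2 * e1"
  shows "x = 0" and "y = 0"
proof -
  have "x * (a1 * e2 - a2 * e1) = 0" and "y * (a1 * e2 - a2 * e1) = 0"
    using assms(1,2) by algebra+
  with assms(3) show "x = 0" and "y = 0" by simp_all
qed

section \<open>Dyadic boxes\<close>

definition monomial :: "('r::finite \<Rightarrow> int) \<Rightarrow> ('r \<Rightarrow> nat) \<Rightarrow> real" where
  "monomial c X = (\<Prod>\<rho>\<in>UNIV. real (X \<rho>) powr real_of_int (c \<rho>))"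

definition dyadic_box :: "('r::finite \<Rightarrow> nat) \<Rightarrow> ('r \<Rightarrow> nat) set" where
  "dyadic_box k = {X. \<forall>\<rho>. 2 ^ k \<rho> \<le> X \<rho> \<and> X \<rho> < 2 ^ (k \<rho> + 1)}"

lemma dyadic_box_eq_PiE: "dyadic_box k = PiE UNIV (\<lambda>\<rho>. {2 ^ k \<rho> ..< 2 ^ (k \<rho> + 1)})"
  unfolding dyadic_box_def PiE_def extensional_def by auto

lemma finite_dyadic_box: "finite (dyadic_box k)"
  by (simp add: dyadic_box_eq_PiE finite_PiE)

lemma card_dyadic_box: "card (dyadic_box k) = 2 ^ sum k UNIV"
  by (simp add: dyadic_box_eq_PiE card_PiE power_sum)

lemma mem_dyadic_box_floor_log: "(\<And>\<rho>. X \<rho> \<ge> 1) \<Longrightarrow> X \<in> dyadic_box (\<lambda>\<rho>. floor_log (X \<rho>))"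
  unfolding dyadic_box_def using floor_log_exp2_le floor_log_exp2_gt by (simp add: Suc_le_eq)

lemma powr_ge_dyadic:
  fixes x k :: nat and e :: real
  assumes "2 ^ k \<le> x" and "x < 2 ^ (k + 1)"
  shows "2 powr (real k * e - max 0 (- e)) \<le> real x powr e"
proof (cases "e \<ge> 0")
  case True
  have "2 powr real k = real (2 ^ k)" by (simp add: powr_realpow)
  also have "\<dots> \<le> real x" using assms(1) by linarith
  finally have le: "2 powr real k \<le> real x" .
  have "(2 powr real k) powr e \<le> real x powr e"
    by (rule powr_mono2[OF True _ le]) simp
  then show ?thesis using True by (simp add: powr_powr)
next
  case False
  have pos: "0 < real x" using assms(1) by (simp add: order.strict_trans2[of 0 "2 ^ k"])
  have "real x \<le> real (2 ^ (k + 1))" using assms(2) by linarith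
  also have "\<dots> = 2 powr real (k + 1)" by (subst powr_realpow) auto
  finally have le: "real x \<le> 2 powr real (k + 1)" .
  have "(2 powr real (k + 1)) powr e \<le> real x powr e"
    by (rule powr_mono2'[OF _ pos le]) (use False in simp)
  then show ?thesis using False by (simp add: powr_powr algebra_simps)
qed

lemma monomial_ge_dyadic:
  assumes "X \<in> dyadic_box k"
  shows "2 powr real_of_int (dot c k - (\<Sum>\<rho>\<in>UNIV. max 0 (- c \<rho>))) \<le> monomial c X"
proof -
  have "2 powr real_of_int (dot c k - (\<Sum>\<rho>\<in>UNIV. max 0 (- c \<rho>))) =
      2 powr (\<Sum>\<rho>\<in>UNIV. real (k \<rho>) * real_of_int (c \<rho>) - max 0 (- real_of_int (c \<rho>)))"
    unfolding dot_def by (simp add: sum_subtractf of_int_max mult.commute)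
  also have "\<dots> = (\<Prod>\<rho>\<in>UNIV. 2 powr (real (k \<rho>) * real_of_int (c \<rho>) - max 0 (- real_of_int (c \<rho>))))"
    by (simp add: powr_sum)
  also have "\<dots> \<le> monomial c X"
    unfolding monomial_def
    by (rule prod_mono) (use assms in \<open>auto simp: dyadic_box_def intro: powr_ge_dyadic\<close>)
  finally show ?thesis .
qed

lemma XE_eq_monomial:
  assumes "\<And>\<rho>. X \<rho> \<ge> 1"
  shows "XE nv \<sigma> \<rho>' X = monomial (E_coef nv \<sigma> \<rho>') X"
proof -
  let ?f = "\<lambda>\<rho>. real (X \<rho>) powr real_of_int (E_coef nv \<sigma> \<rho>' \<rho>)"
  have "prod ?f UNIV = prod ?f (UNIV - \<sigma>) * prod ?f \<sigma>"
    by (rule prod.subset_diff) auto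
  moreover have "prod ?f \<sigma> = 1"
    using assms by (intro prod.neutral) (auto simp: E_coef_def Suc_le_eq)
  ultimately show ?thesis
    unfolding XE_def monomial_def by (simp add: E_coef_def)
qed

lemma bounded_funs_eq_PiE: "{k::'r::finite \<Rightarrow> nat. \<forall>\<rho>. k \<rho> \<le> N} = PiE UNIV (\<lambda>_. {0..N})"
  unfolding PiE_def extensional_def by auto

lemma finite_bounded_funs: "finite {k::'r::finite \<Rightarrow> nat. \<forall>\<rho>. k \<rho> \<le> N}"
  unfolding bounded_funs_eq_PiE by (rule finite_PiE) auto

lemma card_bounded_funs: "card {k::'r::finite \<Rightarrow> nat. \<forall>\<rho>. k \<rho> \<le> N} = (N + 1) ^ CARD('r)"
  unfolding bounded_funs_eq_PiE by (simp add: card_PiE)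

lemma sum_pow_mult_two_pow_le: "(\<Sum>s\<in>{0..N}. (real s + 1) ^ p * 2 ^ s) \<le> (real N + 1) ^ p * 2 ^ (N + 1)"
proof -
  have geometric: "(\<Sum>s\<in>{0..N}. (2::real) ^ s) = 2 ^ (N + 1) - 1"
    by (induction N) simp_all
  have "(\<Sum>s\<in>{0..N}. (real s + 1) ^ p * 2 ^ s) \<le> (\<Sum>s\<in>{0..N}. (real N + 1) ^ p * 2 ^ s)"
    by (rule sum_mono) (auto intro!: mult_right_mono power_mono)
  also have "\<dots> \<le> (real N + 1) ^ p * 2 ^ (N + 1)"
    by (simp add: geometric flip: sum_distrib_left)
  finally show ?thesis .
qed

lemma one_plus_div_two_pow_le: "(1 + real m) / 2 ^ m \<le> 2 * (3 / 4) ^ m"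
proof -
  have "1 + real m \<le> 2 * (3 / 2) ^ m"
  proof (induction m)
    case (Suc m)
    have "(1::real) \<le> (3 / 2) ^ m" by (rule one_le_power) simp
    moreover have "(3 / 2 :: real) ^ Suc m = 3 / 2 * (3 / 2) ^ m" by simp
    ultimately show ?case using Suc.IH by (simp only: of_nat_Suc)
  qed simp
  also have "(3 / 2 :: real) ^ m = (3 / 4) ^ m * 2 ^ m"
    by (simp flip: power_mult_distrib)
  finally show ?thesis by (simp add: divide_le_eq mult.assoc)
qed

lemma sum_one_plus_div_two_pow_le:
  "(\<Sum>c\<in>{c::'r::finite \<Rightarrow> nat. \<forall>\<rho>. c \<rho> \<le> N}. (1 + real (sum c UNIV)) / 2 ^ sum c UNIV)
     \<le> 2 * 4 ^ CARD('r)"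
proof -
  have "(\<Sum>c\<in>{c::'r \<Rightarrow> nat. \<forall>\<rho>. c \<rho> \<le> N}. (3 / 4 :: real) ^ sum c UNIV)
      = (\<Sum>c\<in>PiE (UNIV::'r set) (\<lambda>_. {0..N}). \<Prod>\<rho>\<in>UNIV. (3 / 4) ^ c \<rho>)"
    unfolding bounded_funs_eq_PiE by (simp add: power_sum)
  also have "\<dots> = (\<Prod>\<rho>\<in>(UNIV::'r set). \<Sum>y\<in>{0..N}. (3 / 4) ^ y)"
    by (rule prod_sum_PiE[symmetric]) auto
  also have "\<dots> \<le> (\<Prod>\<rho>\<in>(UNIV::'r set). 4)"
  proof (rule prod_mono)
    have "(\<Sum>y\<in>{0..N}. (3 / 4 :: real) ^ y) = (1 - (3 / 4) ^ Suc N) / (1 - 3 / 4)"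
      using sum_gp_strict[of "3 / 4 :: real" "Suc N"] by (simp add: atLeast0AtMost lessThan_Suc_atMost)
    moreover have "(3 / 4 :: real) ^ N \<le> 1" by (rule power_le_one) auto
    ultimately show "0 \<le> (\<Sum>y\<in>{0..N}. (3 / 4 :: real) ^ y) \<and> (\<Sum>y\<in>{0..N}. (3 / 4 :: real) ^ y) \<le> 4"
      by (simp add: sum_nonneg)
  qed
  finally have "(\<Sum>c\<in>{c::'r \<Rightarrow> nat. \<forall>\<rho>. c \<rho> \<le> N}. (3 / 4 :: real) ^ sum c UNIV) \<le> 4 ^ CARD('r)"
    by simp
  moreover have "(\<Sum>c\<in>{c::'r \<Rightarrow> nat. \<forall>\<rho>. c \<rho> \<le> N}. (1 + real (sum c UNIV)) / 2 ^ sum c UNIV)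
      \<le> 2 * (\<Sum>c\<in>{c::'r \<Rightarrow> nat. \<forall>\<rho>. c \<rho> \<le> N}. (3 / 4 :: real) ^ sum c UNIV)"
    unfolding sum_distrib_left by (rule sum_mono) (rule one_plus_div_two_pow_le)
  ultimately show ?thesis by linarith
qed

lemma nat_floor_power_bound:
  assumes "T \<ge> 0"
  shows "(real (nat \<lfloor>T\<rfloor>) + 1) ^ p * 2 ^ (nat \<lfloor>T\<rfloor> + 1) \<le> (T + 1) ^ p * 2 powr (T + 1)"
proof (rule mult_mono)
  have le: "real (nat \<lfloor>T\<rfloor>) \<le> T" using assms by linarith
  then show "(real (nat \<lfloor>T\<rfloor>) + 1) ^ p \<le> (T + 1) ^ p" by (intro power_mono) auto
  have "(2::real) ^ (nat \<lfloor>T\<rfloor> + 1) = 2 powr real (nat \<lfloor>T\<rfloor> + 1)" by (subst powr_realpow) auto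
  also have "\<dots> \<le> 2 powr (T + 1)" using le by simp
  finally show "(2::real) ^ (nat \<lfloor>T\<rfloor> + 1) \<le> 2 powr (T + 1)" .
qed (use assms in auto)

section \<open>Counting bad dyadic boxes\<close>

text \<open>The dyadic exponent vectors \<open>k\<close> for which a point of anticanonical height at most
  \<open>2^T\<close> lying in \<open>dyadic_box k\<close> may have \<open>X^{E_\<sigma>(\<rho>')} < 2^L\<close>.\<close>
definition bad_exponents ::
    "('r::finite \<Rightarrow> int^'d) \<Rightarrow> 'r set set \<Rightarrow> 'r set \<Rightarrow> 'r \<Rightarrow> real \<Rightarrow> real \<Rightarrow> ('r \<Rightarrow> nat) set" where
  "bad_exponents nv Smax \<sigma> \<rho>' T L = {k. (\<forall>\<sigma>'\<in>Smax. real_of_int (dot (a_coef nv \<sigma>') k) \<le> T) \<and>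
      real_of_int (dot (E_coef nv \<sigma> \<rho>') k) < L}"

locale smooth_complete_fan =
  fixes nv :: "'r::finite \<Rightarrow> int^'d" and Smax :: "'r set set"
  assumes complete_regular_fan: "complete_regular_fan nv Smax"
begin

lemma Z_basis: "\<sigma> \<in> Smax \<Longrightarrow> is_Z_basis nv \<sigma>"
  using complete_regular_fan unfolding complete_regular_fan_def by blast

lemma card_max_cone: "\<sigma> \<in> Smax \<Longrightarrow> card \<sigma> = CARD('d)"
  using Z_basis unfolding is_Z_basis_def by blast

lemma finite_Smax: "finite Smax"
  by (rule finite_subset[of _ UNIV]) auto

lemma Smax_nonempty: "Smax \<noteq> {}"
  using complete_regular_fan unfolding complete_regular_fan_def by blast

lemma pair_m_sigma: "\<sigma> \<in> Smax \<Longrightarrow> \<rho> \<in> \<sigma> \<Longrightarrow> pair (m_sigma nv \<sigma>) (nv \<rho>) = 1"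
  unfolding m_sigma_def using theI'[OF Z_basis_ex1_dual[OF Z_basis, of \<sigma> "\<lambda>_. 1"]] by blast

lemma pair_dual_elt:
  "\<sigma> \<in> Smax \<Longrightarrow> \<rho> \<in> \<sigma> \<Longrightarrow> pair (dual_elt nv \<sigma> \<rho>') (nv \<rho>) = (if \<rho> = \<rho>' then 1 else 0)"
  unfolding dual_elt_def
  using theI'[OF Z_basis_ex1_dual[OF Z_basis, of \<sigma> "\<lambda>\<rho>. if \<rho> = \<rho>' then 1 else 0"]] by blast

lemma a_coef_max_cone: "\<sigma> \<in> Smax \<Longrightarrow> \<rho> \<in> \<sigma> \<Longrightarrow> a_coef nv \<sigma> \<rho> = 0"
  unfolding a_coef_def by (simp add: pair_m_sigma)

lemma dot_a_coef_supported:
  "\<sigma> \<in> Smax \<Longrightarrow> (\<And>\<rho>. \<rho> \<notin> \<sigma> \<Longrightarrow> c \<rho> = 0) \<Longrightarrow> dot (a_coef nv \<sigma>) c = 0"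
  using dot_cong[of "a_coef nv \<sigma>" c "\<lambda>_. 0"] a_coef_max_cone by fastforce

text \<open>Pair the relation \<open>\<Sum> w_\<rho> n_\<rho> = 0\<close> with the dual basis vector \<open>dual_elt nv \<sigma> \<rho>'\<close>.\<close>
lemma dot_E_coef_relation:
  assumes "\<sigma> \<in> Smax" and "\<rho>' \<in> \<sigma>" and "ray_comb nv w = 0"
  shows "dot (E_coef nv \<sigma> \<rho>') w = int (w \<rho>')"
proof -
  let ?p = "\<lambda>\<rho>. pair (dual_elt nv \<sigma> \<rho>') (nv \<rho>) * int (w \<rho>)"
  have "0 = dot (\<lambda>\<rho>. pair (dual_elt nv \<sigma> \<rho>') (nv \<rho>)) w"
    using assms(3) pair_ray_comb[of "dual_elt nv \<sigma> \<rho>'" nv w] by simp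
  also have "\<dots> = sum ?p \<sigma> + sum ?p (UNIV - \<sigma>)"
    unfolding dot_def by (rule sum_UNIV_split)
  also have "sum ?p \<sigma> = int (w \<rho>')"
    using assms(1,2) by (simp add: pair_dual_elt sum.delta' if_distrib[of "\<lambda>x. x * _"] cong: if_cong)
  also have "sum ?p (UNIV - \<sigma>) = - dot (E_coef nv \<sigma> \<rho>') w"
    unfolding dot_def E_coef_def sum_UNIV_split[of _ \<sigma>] by (simp add: sum_negf)
  finally show ?thesis by simp
qed

lemma relation_eqI:
  assumes "\<sigma> \<in> Smax" and "ray_comb nv w1 = 0" and "ray_comb nv w2 = 0"
    and "\<And>\<rho>. \<rho> \<notin> \<sigma> \<Longrightarrow> w1 \<rho> = w2 \<rho>"
  shows "w1 = w2"
proof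
  fix \<rho>
  show "w1 \<rho> = w2 \<rho>"
  proof (cases "\<rho> \<in> \<sigma>")
    case True
    have "dot (E_coef nv \<sigma> \<rho>) w1 = dot (E_coef nv \<sigma> \<rho>) w2"
      by (rule dot_cong) (auto simp: E_coef_def assms(4) split: if_splits)
    with True show ?thesis using assms(1-3) by (simp add: dot_E_coef_relation)
  qed (use assms(4) in blast)
qed

lemma lattice_point_in_cone: "\<exists>\<tau>\<in>Smax. \<exists>c. (\<forall>\<rho>. \<rho> \<notin> \<tau> \<longrightarrow> c \<rho> = 0) \<and> v = ray_comb nv c"
proof -
  have "realv v \<in> (\<Union>\<sigma>\<in>Smax. cone_of nv \<sigma>)"
    using complete_regular_fan unfolding complete_regular_fan_def by simp
  then obtain \<tau> cr where \<tau>: "\<tau> \<in> Smax" and cr: "\<forall>\<rho>\<in>\<tau>. cr \<rho> \<ge> 0"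
    and v_real: "realv v = (\<Sum>\<rho>\<in>\<tau>. cr \<rho> *\<^sub>R realv (nv \<rho>))"
    unfolding cone_of_def by blast
  obtain ci where ci0: "\<forall>\<rho>. \<rho> \<notin> \<tau> \<longrightarrow> ci \<rho> = 0" and v_int: "v = (\<Sum>\<rho>\<in>\<tau>. ci \<rho> *s nv \<rho>)"
    using Z_basis[OF \<tau>] unfolding is_Z_basis_def by blast
  \<comment> \<open>Both expansions are read off by pairing with the dual basis, so they agree.\<close>
  have "real_of_int (ci \<rho>') = cr \<rho>'" if "\<rho>' \<in> \<tau>" for \<rho>'
  proof -
    define m where "m = dual_elt nv \<tau> \<rho>'"
    define rpair where "rpair x = (\<Sum>i\<in>UNIV. real_of_int (m $ i) * x $ i)" for x :: "real^'d"
    have rpair_realv: "rpair (realv u) = real_of_int (pair m u)" for u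
      unfolding rpair_def realv_def pair_def by simp
    have "real_of_int (pair m v) = (\<Sum>\<rho>\<in>\<tau>. cr \<rho> * rpair (realv (nv \<rho>)))"
      unfolding rpair_realv[symmetric] v_real rpair_def
      by (simp add: sum_component sum_distrib_left mult_ac) (rule sum.swap)
    also have "\<dots> = cr \<rho>'"
      using \<tau> that by (simp add: rpair_realv m_def pair_dual_elt if_distrib sum.delta' cong: if_cong)
    finally have "real_of_int (pair m v) = cr \<rho>'" .
    moreover have "pair m v = ci \<rho>'"
      using \<tau> that
      by (simp add: v_int pair_sum_right pair_scale_right m_def pair_dual_elt if_distrib sum.delta' cong: if_cong)
    ultimately show ?thesis by simp
  qed
  then have ci_nonneg: "ci \<rho> \<ge> 0" for \<rho>
    using ci0 cr by (cases "\<rho> \<in> \<tau>") force+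
  have "v = ray_comb nv (\<lambda>\<rho>. nat (ci \<rho>))"
    unfolding v_int ray_comb_def using ci_nonneg ci0
    by (intro sum.mono_neutral_cong_left) auto
  then show ?thesis using \<tau> ci0 by (intro bexI[OF _ \<tau>] exI[of _ "\<lambda>\<rho>. nat (ci \<rho>)"]) auto
qed

text \<open>Take the maximal cone containing \<open>-\<Sum> k_\<rho> n_\<rho>\<close>.\<close>
lemma relation_completion:
  "\<exists>\<tau>\<in>Smax. \<exists>c. (\<forall>\<rho>. \<rho> \<notin> \<tau> \<longrightarrow> c \<rho> = 0) \<and> ray_comb nv (\<lambda>\<rho>. k \<rho> + c \<rho>) = 0"
proof -
  obtain \<tau> c where "\<tau> \<in> Smax" "\<forall>\<rho>. \<rho> \<notin> \<tau> \<longrightarrow> c \<rho> = 0"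
    and eq: "- ray_comb nv k = ray_comb nv c"
    using lattice_point_in_cone[of "- ray_comb nv k"] by blast
  moreover have "ray_comb nv (\<lambda>\<rho>. k \<rho> + c \<rho>) = 0"
    by (simp add: ray_comb_add flip: eq)
  ultimately show ?thesis by blast
qed

lemma relation_completion_choice:
  obtains \<tau> :: "('r \<Rightarrow> nat) \<Rightarrow> 'r set" and c :: "('r \<Rightarrow> nat) \<Rightarrow> 'r \<Rightarrow> nat"
  where "\<And>k. \<tau> k \<in> Smax" and "\<And>k \<rho>. \<rho> \<notin> \<tau> k \<Longrightarrow> c k \<rho> = 0"
    and "\<And>k. ray_comb nv (\<lambda>\<rho>. k \<rho> + c k \<rho>) = 0"
proof -
  have "\<forall>k. \<exists>p. fst p \<in> Smax \<and> (\<forall>\<rho>. \<rho> \<notin> fst p \<longrightarrow> snd p \<rho> = 0) \<and>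
      ray_comb nv (\<lambda>\<rho>. k \<rho> + snd p \<rho>) = 0"
  proof
    fix k
    obtain \<tau> c where "\<tau> \<in> Smax" "\<forall>\<rho>. \<rho> \<notin> \<tau> \<longrightarrow> c \<rho> = 0" "ray_comb nv (\<lambda>\<rho>. k \<rho> + c \<rho>) = 0"
      using relation_completion[of k] by blast
    then show "\<exists>p. fst p \<in> Smax \<and> (\<forall>\<rho>. \<rho> \<notin> fst p \<longrightarrow> snd p \<rho> = 0) \<and>
        ray_comb nv (\<lambda>\<rho>. k \<rho> + snd p \<rho>) = 0"
      by (intro exI[of _ "(\<tau>, c)"]) simp
  qed
  then obtain p where "\<forall>k. fst (p k) \<in> Smax \<and> (\<forall>\<rho>. \<rho> \<notin> fst (p k) \<longrightarrow> snd (p k) \<rho> = 0) \<and>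
      ray_comb nv (\<lambda>\<rho>. k \<rho> + snd (p k) \<rho>) = 0"
    by (rule choice[THEN exE])
  then show ?thesis using that[of "fst \<circ> p" "snd \<circ> p"] by auto
qed

lemma completed_height_le:
  assumes "\<forall>\<sigma>\<in>Smax. real_of_int (dot (a_coef nv \<sigma>) k) \<le> T"
    and "\<tau> \<in> Smax" and "\<And>\<rho>. \<rho> \<notin> \<tau> \<Longrightarrow> c \<rho> = 0" and "ray_comb nv (\<lambda>\<rho>. k \<rho> + c \<rho>) = 0"
  shows "real (sum k UNIV + sum c UNIV) \<le> T"
proof -
  have "int (sum k UNIV + sum c UNIV) = dot (a_coef nv \<tau>) (\<lambda>\<rho>. k \<rho> + c \<rho>)"
    using dot_a_coef_relation[OF assms(4)] by (simp add: sum.distrib)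
  also have "\<dots> = dot (a_coef nv \<tau>) k"
    using dot_a_coef_supported[OF assms(2,3)] by (simp add: dot_add)
  finally have "real_of_int (int (sum k UNIV + sum c UNIV)) \<le> T" using assms(1,2) by simp
  then show ?thesis by simp
qed

lemma exponent_le_height:
  assumes "\<forall>\<sigma>\<in>Smax. real_of_int (dot (a_coef nv \<sigma>) k) \<le> T"
  shows "k \<rho> \<le> nat \<lfloor>T\<rfloor>"
proof -
  obtain \<tau> c where \<tau>: "\<tau> \<in> Smax" and c0: "\<forall>\<rho>. \<rho> \<notin> \<tau> \<longrightarrow> c \<rho> = 0"
    and rel: "ray_comb nv (\<lambda>\<rho>. k \<rho> + c \<rho>) = 0"
    using relation_completion by blast
  have "real (sum k UNIV + sum c UNIV) \<le> T"
    by (rule completed_height_le[OF assms \<tau> _ rel]) (use c0 in blast)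
  moreover have "real (k \<rho>) \<le> real (sum k UNIV + sum c UNIV)"
    by (rule of_nat_mono) (use le_sum_UNIV[of k \<rho>] in linarith)
  ultimately show ?thesis
    by (intro le_nat_floor) linarith
qed

lemma bad_exponents_subset: "bad_exponents nv Smax \<sigma> \<rho>' T L \<subseteq> {k. \<forall>\<rho>. k \<rho> \<le> nat \<lfloor>T\<rfloor>}"
  by (auto simp: bad_exponents_def intro: exponent_le_height)

lemma finite_bad_exponents: "finite (bad_exponents nv Smax \<sigma> \<rho>' T L)"
  using finite_subset[OF bad_exponents_subset finite_bounded_funs] .

lemma E_coef_minor_or_proportional:
  assumes "\<sigma> \<in> Smax" and "\<rho>' \<in> \<sigma>"
  shows "(\<exists>i j. a_coef nv \<sigma> i * E_coef nv \<sigma> \<rho>' j \<noteq> a_coef nv \<sigma> j * E_coef nv \<sigma> \<rho>' i) \<or>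
    (\<exists>\<mu>>0. \<forall>\<rho>. real_of_int (E_coef nv \<sigma> \<rho>' \<rho>) = \<mu> * real_of_int (a_coef nv \<sigma> \<rho>))"
proof -
  obtain \<tau> c where "\<tau> \<in> Smax" and "\<forall>\<rho>. \<rho> \<notin> \<tau> \<longrightarrow> c \<rho> = 0"
    and rel: "ray_comb nv (\<lambda>\<rho>. of_bool (\<rho> = \<rho>') + c \<rho>) = 0"
    using relation_completion[of "\<lambda>\<rho>. of_bool (\<rho> = \<rho>')"] by blast
  define w where "w = (\<lambda>\<rho>. of_bool (\<rho> = \<rho>') + c \<rho>)"
  have rel_w: "ray_comb nv w = 0" using rel unfolding w_def .
  have "1 \<le> int (w \<rho>')" by (simp add: w_def)
  moreover have "int (w \<rho>') \<le> int (sum w UNIV)" by (simp only: of_nat_le_iff le_sum_UNIV)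
  moreover have "dot (a_coef nv \<sigma>) w = int (sum w UNIV)" by (rule dot_a_coef_relation[OF rel_w])
  moreover have "dot (E_coef nv \<sigma> \<rho>') w = int (w \<rho>')" by (rule dot_E_coef_relation[OF assms rel_w])
  ultimately have "dot (a_coef nv \<sigma>) w > 0" and "dot (E_coef nv \<sigma> \<rho>') w > 0" by linarith+
  then show ?thesis by (rule minor_nonzero_or_proportional)
qed

lemma minor_indices:
  assumes "\<sigma> \<in> Smax" and "a_coef nv \<sigma> i * E_coef nv \<sigma> \<rho>' j \<noteq> a_coef nv \<sigma> j * E_coef nv \<sigma> \<rho>' i"
  shows "i \<notin> \<sigma>" and "j \<notin> \<sigma>" and "i \<noteq> j"
  using assms by (auto simp: a_coef_max_cone E_coef_def)

text \<open>On a relation, \<open>\<Sum> w\<close> and \<open>w \<rho>'\<close> are the linear forms \<open>D_0(\<sigma>)\<close> and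
  \<open>E_\<sigma>(\<rho>')\<close>; the nonvanishing minor makes them independent in the coordinates \<open>i, j\<close>.\<close>
lemma relation_eq_if_agree:
  assumes \<sigma>: "\<sigma> \<in> Smax" and \<rho>': "\<rho>' \<in> \<sigma>"
    and minor: "a_coef nv \<sigma> i * E_coef nv \<sigma> \<rho>' j \<noteq> a_coef nv \<sigma> j * E_coef nv \<sigma> \<rho>' i"
    and rel: "ray_comb nv w1 = 0" "ray_comb nv w2 = 0"
    and sums: "sum w1 UNIV = sum w2 UNIV" and at_\<rho>': "w1 \<rho>' = w2 \<rho>'"
    and agree: "\<And>\<rho>. \<rho> \<notin> \<sigma> \<Longrightarrow> \<rho> \<noteq> i \<Longrightarrow> \<rho> \<noteq> j \<Longrightarrow> w1 \<rho> = w2 \<rho>"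
  shows "w1 = w2"
proof -
  note ij = minor_indices[OF \<sigma> minor]
  define d where "d \<rho> = int (w1 \<rho>) - int (w2 \<rho>)" for \<rho>
  have diff: "dot c w1 - dot c w2 = c i * d i + c j * d j" if "\<And>\<rho>. \<rho> \<in> \<sigma> \<Longrightarrow> c \<rho> = 0" for c
    unfolding d_def by (rule dot_diff_two_support[OF ij(3)]) (use agree that in blast)
  have "a_coef nv \<sigma> i * d i + a_coef nv \<sigma> j * d j = 0"
    using diff[of "a_coef nv \<sigma>"] by (simp add: a_coef_max_cone[OF \<sigma>] dot_a_coef_relation rel sums)
  moreover have "E_coef nv \<sigma> \<rho>' i * d i + E_coef nv \<sigma> \<rho>' j * d j = 0"
    using diff[of "E_coef nv \<sigma> \<rho>'"] by (simp add: E_coef_def dot_E_coef_relation[OF \<sigma> \<rho>'] rel at_\<rho>')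
  ultimately have "d i = 0" "d j = 0"
    using linear_system_2x2_trivial minor by blast+
  then have "w1 \<rho> = w2 \<rho>" if "\<rho> \<notin> \<sigma>" for \<rho>
    using agree[OF that] unfolding d_def by fastforce
  then show ?thesis by (rule relation_eqI[OF \<sigma> rel])
qed

lemma card_relation_fiber:
  assumes \<sigma>: "\<sigma> \<in> Smax" and \<rho>': "\<rho>' \<in> \<sigma>"
    and minor: "a_coef nv \<sigma> i * E_coef nv \<sigma> \<rho>' j \<noteq> a_coef nv \<sigma> j * E_coef nv \<sigma> \<rho>' i"
  shows "card {w. ray_comb nv w = 0 \<and> sum w UNIV = s \<and> w \<rho>' = t} \<le> (s + 1) ^ (pic_rank nv - 2)"
proof -
  let ?F = "{w. ray_comb nv w = 0 \<and> sum w UNIV = s \<and> w \<rho>' = t}"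
  let ?S = "(UNIV - \<sigma>) - {i, j}"
  note ij = minor_indices[OF \<sigma> minor]
  have "card ?S = card (UNIV - \<sigma>) - 2"
    using ij by (subst card_Diff_subset) auto
  also have "card (UNIV - \<sigma>) = pic_rank nv"
    using card_max_cone[OF \<sigma>] by (simp add: pic_rank_def card_Diff_subset)
  finally have card_S: "card ?S = pic_rank nv - 2" .
  have "inj_on (\<lambda>w. restrict w ?S) ?F"
  proof (rule inj_onI)
    fix w1 w2 assume w1: "w1 \<in> ?F" and w2: "w2 \<in> ?F" and eq: "restrict w1 ?S = restrict w2 ?S"
    have "w1 \<rho> = w2 \<rho>" if "\<rho> \<notin> \<sigma>" "\<rho> \<noteq> i" "\<rho> \<noteq> j" for \<rho>
      using fun_cong[OF eq, of \<rho>] that by simp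
    with w1 w2 show "w1 = w2"
      by (intro relation_eq_if_agree[OF \<sigma> \<rho>' minor]) auto
  qed
  moreover have "(\<lambda>w. restrict w ?S) ` ?F \<subseteq> PiE ?S (\<lambda>_. {0..s})"
  proof
    fix x assume "x \<in> (\<lambda>w. restrict w ?S) ` ?F"
    then obtain w where "w \<in> ?F" and x: "x = restrict w ?S" by blast
    then have "w \<rho> \<le> s" for \<rho> using le_sum_UNIV[of w \<rho>] by simp
    then show "x \<in> PiE ?S (\<lambda>_. {0..s})" unfolding x by auto
  qed
  ultimately have "card ?F \<le> card (PiE ?S (\<lambda>_. {0..s}))"
    by (intro card_inj_on_le) (auto intro: finite_PiE)
  then show ?thesis by (simp add: card_PiE card_S)
qed

lemma sum_relations_le:
  assumes \<sigma>: "\<sigma> \<in> Smax" and \<rho>': "\<rho>' \<in> \<sigma>"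
    and minor: "a_coef nv \<sigma> i * E_coef nv \<sigma> \<rho>' j \<noteq> a_coef nv \<sigma> j * E_coef nv \<sigma> \<rho>' i"
  shows "(\<Sum>w | ray_comb nv w = 0 \<and> sum w UNIV \<le> N \<and> w \<rho>' \<le> M. (2::real) ^ sum w UNIV)
    \<le> (real M + 1) * ((real N + 1) ^ (pic_rank nv - 2) * 2 ^ (N + 1))"
proof -
  define W where "W = {w. ray_comb nv w = 0 \<and> sum w UNIV \<le> N \<and> w \<rho>' \<le> M}"
  let ?p = "pic_rank nv - 2"
  have "W \<subseteq> {w. \<forall>\<rho>. w \<rho> \<le> N}"
    unfolding W_def using le_sum_UNIV order.trans by blast
  then have finW: "finite W" using finite_bounded_funs finite_subset by blast
  have into: "(\<lambda>w. (sum w UNIV, w \<rho>')) ` W \<subseteq> {0..N} \<times> {0..M}"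
    by (auto simp: W_def)
  have "(\<Sum>w\<in>W. (2::real) ^ sum w UNIV)
      = (\<Sum>st\<in>{0..N} \<times> {0..M}. \<Sum>w\<in>{w\<in>W. (sum w UNIV, w \<rho>') = st}. 2 ^ sum w UNIV)"
    by (rule sum.group[symmetric, OF finW _ into]) simp
  also have "\<dots> \<le> (\<Sum>(s, t)\<in>{0..N} \<times> {0..M}. (real s + 1) ^ ?p * 2 ^ s)"
  proof (rule sum_mono, clarify)
    fix s t
    let ?F = "{w. ray_comb nv w = 0 \<and> sum w UNIV = s \<and> w \<rho>' = t}"
    assume "s \<in> {0..N}" "t \<in> {0..M}"
    then have "{w\<in>W. (sum w UNIV, w \<rho>') = (s, t)} = ?F" by (auto simp: W_def)
    moreover have "(\<Sum>w\<in>?F. (2::real) ^ sum w UNIV) = real (card ?F) * 2 ^ s"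
      by (subst sum.cong[of ?F ?F _ "\<lambda>_. 2 ^ s"]) simp_all
    moreover have "real (card ?F) \<le> real ((s + 1) ^ ?p)"
      by (rule of_nat_mono[OF card_relation_fiber[OF assms]])
    ultimately show "(\<Sum>w\<in>{w\<in>W. (sum w UNIV, w \<rho>') = (s, t)}. (2::real) ^ sum w UNIV) \<le> (real s + 1) ^ ?p * 2 ^ s"
      by (simp add: mult_right_mono add.commute)
  qed
  also have "\<dots> = (real M + 1) * (\<Sum>s\<in>{0..N}. (real s + 1) ^ ?p * 2 ^ s)"
    by (simp add: sum.cartesian_product[symmetric] sum_distrib_left add.commute)
  also have "\<dots> \<le> (real M + 1) * ((real N + 1) ^ ?p * 2 ^ (N + 1))"
    by (intro mult_left_mono sum_pow_mult_two_pow_le) auto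
  finally show ?thesis unfolding W_def .
qed

lemma bad_exponent_completion_bounds:
  assumes \<sigma>: "\<sigma> \<in> Smax" and \<rho>': "\<rho>' \<in> \<sigma>" and k: "k \<in> bad_exponents nv Smax \<sigma> \<rho>' T L"
    and \<tau>: "\<tau> \<in> Smax" and c0: "\<And>\<rho>. \<rho> \<notin> \<tau> \<Longrightarrow> c \<rho> = 0" and rel: "ray_comb nv (\<lambda>\<rho>. k \<rho> + c \<rho>) = 0"
  defines "C \<equiv> real_of_int (\<Sum>\<rho>\<in>UNIV. \<bar>E_coef nv \<sigma> \<rho>' \<rho>\<bar>)"
  shows "sum k UNIV + sum c UNIV \<le> nat \<lfloor>T\<rfloor>"
    and "k \<rho>' + c \<rho>' \<le> nat \<lfloor>L + C * real (sum c UNIV)\<rfloor>"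
proof -
  have height: "\<forall>\<sigma>\<in>Smax. real_of_int (dot (a_coef nv \<sigma>) k) \<le> T"
    and small_E: "real_of_int (dot (E_coef nv \<sigma> \<rho>') k) < L"
    using k by (auto simp: bad_exponents_def)
  show "sum k UNIV + sum c UNIV \<le> nat \<lfloor>T\<rfloor>"
    using completed_height_le[OF height \<tau> c0 rel] by (intro le_nat_floor) simp
  have "E_coef nv \<sigma> \<rho>' \<rho> \<le> (\<Sum>\<rho>\<in>UNIV. \<bar>E_coef nv \<sigma> \<rho>' \<rho>\<bar>)" for \<rho>
    using abs_ge_self[of "E_coef nv \<sigma> \<rho>' \<rho>"] member_le_sum[of \<rho> UNIV "\<lambda>\<rho>. \<bar>E_coef nv \<sigma> \<rho>' \<rho>\<bar>"]
    by simp
  then have "dot (E_coef nv \<sigma> \<rho>') c \<le> (\<Sum>\<rho>\<in>UNIV. \<bar>E_coef nv \<sigma> \<rho>' \<rho>\<bar>) * int (sum c UNIV)"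
    by (rule dot_le_mult_sum)
  then have "real_of_int (dot (E_coef nv \<sigma> \<rho>') c)
      \<le> real_of_int ((\<Sum>\<rho>\<in>UNIV. \<bar>E_coef nv \<sigma> \<rho>' \<rho>\<bar>) * int (sum c UNIV))"
    by (simp only: of_int_le_iff)
  then have "real_of_int (dot (E_coef nv \<sigma> \<rho>') c) \<le> C * real (sum c UNIV)"
    unfolding C_def by (simp only: of_int_mult of_int_of_nat_eq)
  moreover have "int (k \<rho>' + c \<rho>') = dot (E_coef nv \<sigma> \<rho>') k + dot (E_coef nv \<sigma> \<rho>') c"
    using dot_E_coef_relation[OF \<sigma> \<rho>' rel] by (simp add: dot_add)
  ultimately show "k \<rho>' + c \<rho>' \<le> nat \<lfloor>L + C * real (sum c UNIV)\<rfloor>"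
    using small_E by (intro le_nat_floor) linarith
qed

lemma sum_weighted_relations_le:
  assumes \<sigma>: "\<sigma> \<in> Smax" and \<rho>': "\<rho>' \<in> \<sigma>"
    and minor: "a_coef nv \<sigma> i * E_coef nv \<sigma> \<rho>' j \<noteq> a_coef nv \<sigma> j * E_coef nv \<sigma> \<rho>' i"
    and "L \<ge> 0" and "C \<ge> 0"
  shows "(\<Sum>c\<in>{c::'r \<Rightarrow> nat. \<forall>\<rho>. c \<rho> \<le> N}.
      (\<Sum>w | ray_comb nv w = 0 \<and> sum w UNIV \<le> N \<and> w \<rho>' \<le> nat \<lfloor>L + C * real (sum c UNIV)\<rfloor>.
        (2::real) ^ sum w UNIV) / 2 ^ sum c UNIV)
    \<le> (L + C + 1) * (2 * 4 ^ CARD('r)) * ((real N + 1) ^ (pic_rank nv - 2) * 2 ^ (N + 1))"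
  (is "(\<Sum>c\<in>?Cs. ?S c / _) \<le> _ * _ * ?Q")
proof -
  have each: "?S c / 2 ^ sum c UNIV \<le> (L + C + 1) * ?Q * ((1 + real (sum c UNIV)) / 2 ^ sum c UNIV)"
    for c :: "'r \<Rightarrow> nat"
  proof -
    define x where "x = real (sum c UNIV)"
    have "0 \<le> x" unfolding x_def by (rule of_nat_0_le_iff)
    then have "0 \<le> L * x" "0 \<le> C * x" using assms(4,5) by simp_all
    have "real (nat \<lfloor>L + C * x\<rfloor>) \<le> L + C * x"
      using \<open>0 \<le> C * x\<close> assms(4) by linarith
    moreover have "L + C * x + 1 \<le> (L + C + 1) * (1 + x)"
      using \<open>0 \<le> L * x\<close> \<open>0 \<le> x\<close> assms(5) by (simp add: algebra_simps)
    ultimately have "real (nat \<lfloor>L + C * x\<rfloor>) + 1 \<le> (L + C + 1) * (1 + x)"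
      by linarith
    then have M: "real (nat \<lfloor>L + C * real (sum c UNIV)\<rfloor>) + 1 \<le> (L + C + 1) * (1 + real (sum c UNIV))"
      by (simp only: x_def)
    have "?S c \<le> (real (nat \<lfloor>L + C * real (sum c UNIV)\<rfloor>) + 1) * ?Q"
      by (rule sum_relations_le[OF \<sigma> \<rho>' minor])
    also have "\<dots> \<le> (L + C + 1) * (1 + real (sum c UNIV)) * ?Q"
      by (rule mult_right_mono[OF M]) simp
    finally have "?S c / 2 ^ sum c UNIV \<le> (L + C + 1) * (1 + real (sum c UNIV)) * ?Q / 2 ^ sum c UNIV"
      by (rule divide_right_mono) simp
    then show ?thesis by (simp only: times_divide_eq_right mult_ac)
  qed
  have "(\<Sum>c\<in>?Cs. ?S c / 2 ^ sum c UNIV)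
      \<le> (\<Sum>c\<in>?Cs. (L + C + 1) * ?Q * ((1 + real (sum c UNIV)) / 2 ^ sum c UNIV))"
    by (rule sum_mono) (rule each)
  also have "\<dots> = (L + C + 1) * ?Q * (\<Sum>c\<in>?Cs. (1 + real (sum c UNIV)) / 2 ^ sum c UNIV)"
    by (rule sum_distrib_left[symmetric])
  also have "\<dots> \<le> (L + C + 1) * ?Q * (2 * 4 ^ CARD('r))"
    using assms(4,5) by (intro mult_left_mono sum_one_plus_div_two_pow_le) auto
  finally show ?thesis by (simp only: mult_ac)
qed

lemma sum_bad_exponents_le_sum_relations:
  assumes \<sigma>: "\<sigma> \<in> Smax" and \<rho>': "\<rho>' \<in> \<sigma>"
  defines "C \<equiv> real_of_int (\<Sum>\<rho>\<in>UNIV. \<bar>E_coef nv \<sigma> \<rho>' \<rho>\<bar>)"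
  shows "(\<Sum>k\<in>bad_exponents nv Smax \<sigma> \<rho>' T L. (2::real) ^ sum k UNIV)
    \<le> (\<Sum>c\<in>{c::'r \<Rightarrow> nat. \<forall>\<rho>. c \<rho> \<le> nat \<lfloor>T\<rfloor>}.
      (\<Sum>w | ray_comb nv w = 0 \<and> sum w UNIV \<le> nat \<lfloor>T\<rfloor> \<and> w \<rho>' \<le> nat \<lfloor>L + C * real (sum c UNIV)\<rfloor>.
        (2::real) ^ sum w UNIV) / 2 ^ sum c UNIV)"
proof -
  obtain \<tau> c where \<tau>: "\<And>k. \<tau> k \<in> Smax" and c0: "\<And>k \<rho>. \<rho> \<notin> \<tau> k \<Longrightarrow> c k \<rho> = 0"
    and rel: "\<And>k. ray_comb nv (\<lambda>\<rho>. k \<rho> + c k \<rho>) = 0"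
    using relation_completion_choice by blast
  define N where "N = nat \<lfloor>T\<rfloor>"
  define Cs where "Cs = {c'::'r \<Rightarrow> nat. \<forall>\<rho>. c' \<rho> \<le> N}"
  define W where "W c' = {w. ray_comb nv w = 0 \<and> sum w UNIV \<le> N \<and> w \<rho>' \<le> nat \<lfloor>L + C * real (sum c' UNIV)\<rfloor>}"
    for c' :: "'r \<Rightarrow> nat"
  define g where "g = (\<lambda>(c' :: 'r \<Rightarrow> nat, w :: 'r \<Rightarrow> nat). (2::real) ^ sum w UNIV / 2 ^ sum c' UNIV)"
  let ?K = "bad_exponents nv Smax \<sigma> \<rho>' T L"
  \<comment> \<open>A bad exponent \<open>k\<close> is recovered from its completion \<open>c\<close> and the relation \<open>k + c\<close>.\<close>
  define f where "f k = (c k, \<lambda>\<rho>. k \<rho> + c k \<rho>)" for k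
  have "f k \<in> Sigma Cs W" if k: "k \<in> ?K" for k
  proof -
    note bounds = bad_exponent_completion_bounds[OF \<sigma> \<rho>' k \<tau>[of k] c0[where k = k] rel[of k],
        folded C_def N_def]
    have "c k \<rho> \<le> N" for \<rho>
      using bounds(1) le_sum_UNIV[of "c k" \<rho>] by simp
    then show ?thesis
      using bounds rel by (simp add: f_def Cs_def W_def sum.distrib)
  qed
  then have f_into: "f ` ?K \<subseteq> Sigma Cs W" by blast
  have inj: "inj_on f ?K" by (auto simp: inj_on_def f_def fun_eq_iff)
  have bounded: "W c' \<subseteq> {w. \<forall>\<rho>. w \<rho> \<le> N}" for c'
    unfolding W_def using le_sum_UNIV order.trans by blast
  have fin_W: "finite (W c')" for c'
    using finite_subset[OF bounded finite_bounded_funs] .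
  have fin_Cs: "finite Cs"
    unfolding Cs_def by (rule finite_bounded_funs)
  have "(\<Sum>k\<in>?K. (2::real) ^ sum k UNIV) = (\<Sum>k\<in>?K. g (f k))"
    by (rule sum.cong) (simp_all add: g_def f_def sum.distrib power_add)
  also have "\<dots> = sum g (f ` ?K)" by (simp add: sum.reindex[OF inj])
  also have "\<dots> \<le> sum g (Sigma Cs W)"
    by (rule sum_mono2[OF _ f_into]) (auto simp: g_def fin_Cs fin_W split: prod.splits)
  also have "\<dots> = (\<Sum>c'\<in>Cs. \<Sum>w\<in>W c'. (2::real) ^ sum w UNIV / 2 ^ sum c' UNIV)"
    unfolding g_def by (rule sum.Sigma[symmetric]) (simp_all add: fin_Cs fin_W)
  also have "\<dots> = (\<Sum>c'\<in>Cs. (\<Sum>w\<in>W c'. (2::real) ^ sum w UNIV) / 2 ^ sum c' UNIV)"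
    by (simp add: sum_divide_distrib)
  finally show ?thesis unfolding Cs_def W_def N_def .
qed

lemma sum_bad_exponents_le_nondegenerate:
  assumes \<sigma>: "\<sigma> \<in> Smax" and \<rho>': "\<rho>' \<in> \<sigma>"
    and minor: "a_coef nv \<sigma> i * E_coef nv \<sigma> \<rho>' j \<noteq> a_coef nv \<sigma> j * E_coef nv \<sigma> \<rho>' i"
    and "L \<ge> 0" and "T \<ge> 0"
  defines "C \<equiv> real_of_int (\<Sum>\<rho>\<in>UNIV. \<bar>E_coef nv \<sigma> \<rho>' \<rho>\<bar>)"
  shows "(\<Sum>k\<in>bad_exponents nv Smax \<sigma> \<rho>' T L. (2::real) ^ sum k UNIV)
    \<le> (L + C + 1) * (2 * 4 ^ CARD('r)) * ((T + 1) ^ (pic_rank nv - 2) * 2 powr (T + 1))"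
proof -
  have "C \<ge> 0" unfolding C_def by (simp add: sum_nonneg)
  have "(\<Sum>k\<in>bad_exponents nv Smax \<sigma> \<rho>' T L. (2::real) ^ sum k UNIV)
    \<le> (\<Sum>c\<in>{c::'r \<Rightarrow> nat. \<forall>\<rho>. c \<rho> \<le> nat \<lfloor>T\<rfloor>}.
      (\<Sum>w | ray_comb nv w = 0 \<and> sum w UNIV \<le> nat \<lfloor>T\<rfloor> \<and> w \<rho>' \<le> nat \<lfloor>L + C * real (sum c UNIV)\<rfloor>.
        (2::real) ^ sum w UNIV) / 2 ^ sum c UNIV)"
    unfolding C_def by (rule sum_bad_exponents_le_sum_relations[OF \<sigma> \<rho>'])
  also have "\<dots> \<le> (L + C + 1) * (2 * 4 ^ CARD('r))
      * ((real (nat \<lfloor>T\<rfloor>) + 1) ^ (pic_rank nv - 2) * 2 ^ (nat \<lfloor>T\<rfloor> + 1))"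
    by (rule sum_weighted_relations_le[OF \<sigma> \<rho>' minor \<open>L \<ge> 0\<close> \<open>C \<ge> 0\<close>])
  also have "\<dots> \<le> (L + C + 1) * (2 * 4 ^ CARD('r)) * ((T + 1) ^ (pic_rank nv - 2) * 2 powr (T + 1))"
    using nat_floor_power_bound[OF \<open>T \<ge> 0\<close>] \<open>L \<ge> 0\<close> \<open>C \<ge> 0\<close> by (intro mult_left_mono) auto
  finally show ?thesis .
qed

text \<open>Here \<open>X^{E_\<sigma>(\<rho>')} = (X^{D_0(\<sigma>)})^\<mu>\<close>, so a small value of it bounds the height
  \<open>X^{D_0(\<sigma>)}\<close> itself, not just \<open>log\<close> of it.\<close>
lemma bad_exponent_sum_le_degenerate:
  fixes \<alpha> :: int and \<mu> :: real
  assumes \<sigma>: "\<sigma> \<in> Smax" and k: "k \<in> bad_exponents nv Smax \<sigma> \<rho>' T L"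
    and \<mu>: "\<mu> > 0" and proportional: "\<And>\<rho>. real_of_int (E_coef nv \<sigma> \<rho>' \<rho>) = \<mu> * real_of_int (a_coef nv \<sigma> \<rho>)"
    and \<alpha>: "\<alpha> \<ge> 1" "\<And>\<rho>. a_coef nv \<sigma> \<rho> \<le> \<alpha>"
  shows "real (sum k UNIV) \<le> (1 - 1 / \<alpha>) * T + L / (\<mu> * \<alpha>)"
proof -
  obtain \<tau> c where \<tau>: "\<tau> \<in> Smax" and c0: "\<forall>\<rho>. \<rho> \<notin> \<tau> \<longrightarrow> c \<rho> = 0"
    and rel: "ray_comb nv (\<lambda>\<rho>. k \<rho> + c \<rho>) = 0"
    using relation_completion by blast
  have height: "\<forall>\<sigma>\<in>Smax. real_of_int (dot (a_coef nv \<sigma>) k) \<le> T"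
    and small_E: "real_of_int (dot (E_coef nv \<sigma> \<rho>') k) < L"
    using k by (auto simp: bad_exponents_def)
  define S where "S = real (sum k UNIV)"
  define Sc where "Sc = real (sum c UNIV)"
  have "S + Sc \<le> T"
    using completed_height_le[OF height \<tau>] c0 rel by (simp add: S_def Sc_def)
  have "real_of_int (dot (E_coef nv \<sigma> \<rho>') k) = \<mu> * real_of_int (dot (a_coef nv \<sigma>) k)"
    unfolding dot_def by (simp add: proportional sum_distrib_left mult_ac)
  with small_E \<mu> have "real_of_int (dot (a_coef nv \<sigma>) k) < L / \<mu>"
    by (simp add: field_simps)
  moreover have "dot (a_coef nv \<sigma>) k + dot (a_coef nv \<sigma>) c = int (sum k UNIV) + int (sum c UNIV)"
    using dot_a_coef_relation[OF rel] by (simp only: dot_add sum.distrib of_nat_add)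
  then have "real_of_int (dot (a_coef nv \<sigma>) k) = S + Sc - real_of_int (dot (a_coef nv \<sigma>) c)"
    unfolding S_def Sc_def by (simp only: of_int_add of_int_of_nat_eq flip: of_int_eq_iff)
  moreover have "dot (a_coef nv \<sigma>) c \<le> \<alpha> * int (sum c UNIV)"
    using \<alpha>(2) by (rule dot_le_mult_sum)
  then have "real_of_int (dot (a_coef nv \<sigma>) c) \<le> real_of_int (\<alpha> * int (sum c UNIV))"
    by (simp only: of_int_le_iff)
  then have "real_of_int (dot (a_coef nv \<sigma>) c) \<le> \<alpha> * Sc"
    unfolding Sc_def by (simp only: of_int_mult of_int_of_nat_eq)
  ultimately have "S + Sc - \<alpha> * Sc < L / \<mu>" by linarith
  then have "\<alpha> * S \<le> (\<alpha> - 1) * T + L / \<mu>"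
    using \<open>S + Sc \<le> T\<close> \<alpha>(1) mult_left_mono[of "S + Sc" T "\<alpha> - 1"] by (simp add: algebra_simps)
  then show ?thesis
    using \<alpha>(1) \<mu> unfolding S_def by (simp add: field_simps)
qed

lemma sum_bad_exponents_le_degenerate:
  fixes \<alpha> :: int and \<mu> :: real
  assumes \<sigma>: "\<sigma> \<in> Smax"
    and \<mu>: "\<mu> > 0" and proportional: "\<And>\<rho>. real_of_int (E_coef nv \<sigma> \<rho>' \<rho>) = \<mu> * real_of_int (a_coef nv \<sigma> \<rho>)"
    and \<alpha>: "\<alpha> \<ge> 1" "\<And>\<rho>. a_coef nv \<sigma> \<rho> \<le> \<alpha>"
    and "T \<ge> 0"
  shows "(\<Sum>k\<in>bad_exponents nv Smax \<sigma> \<rho>' T L. (2::real) ^ sum k UNIV)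
    \<le> (T + 1) ^ CARD('r) * 2 powr ((1 - 1 / \<alpha>) * T + L / (\<mu> * \<alpha>))"
proof -
  let ?K = "bad_exponents nv Smax \<sigma> \<rho>' T L" and ?b = "(1 - 1 / \<alpha>) * T + L / (\<mu> * \<alpha>)"
  have "(\<Sum>k\<in>?K. (2::real) ^ sum k UNIV) \<le> (\<Sum>k\<in>?K. 2 powr ?b)"
    using bad_exponent_sum_le_degenerate[OF \<sigma> _ \<mu> proportional \<alpha>] by (intro sum_mono) (simp flip: powr_realpow)
  also have "\<dots> = real (card ?K) * 2 powr ?b" by simp
  also have "\<dots> \<le> (T + 1) ^ CARD('r) * 2 powr ?b"
  proof (rule mult_right_mono)
    have "card ?K \<le> card {k::'r \<Rightarrow> nat. \<forall>\<rho>. k \<rho> \<le> nat \<lfloor>T\<rfloor>}"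
      by (rule card_mono[OF finite_bounded_funs bad_exponents_subset])
    then have "real (card ?K) \<le> real ((nat \<lfloor>T\<rfloor> + 1) ^ CARD('r))"
      unfolding card_bounded_funs by (rule of_nat_mono)
    also have "\<dots> = (real (nat \<lfloor>T\<rfloor>) + 1) ^ CARD('r)" by (simp only: of_nat_power of_nat_add of_nat_1)
    also have "\<dots> \<le> (T + 1) ^ CARD('r)"
      using \<open>T \<ge> 0\<close> by (intro power_mono) linarith+
    finally show "real (card ?K) \<le> (T + 1) ^ CARD('r)" .
  qed simp
  finally show ?thesis .
qed

end


section \<open>Asymptotics\<close>

lemma bigo_nondegenerate_bound:
  "(\<lambda>B::real. (A * log 2 (ln B) + K) * K' * ((log 2 B + 1) ^ p * 2 powr (log 2 B + 1)))
    \<in> O[at_top](\<lambda>B. B * ln B powr real p * ln (ln B))"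
  by real_asymp

lemma bigo_degenerate_bound:
  "e > 0 \<Longrightarrow> (\<lambda>B::real. (log 2 B + 1) ^ n * (B powr (1 - e) * ln B powr q * K))
    \<in> O[at_top](\<lambda>B. B * ln B powr r * ln (ln B))"
  by real_asymp

lemma bigoI_eventually_le:
  assumes "eventually (\<lambda>x. 0 \<le> f x \<and> f x \<le> h x) F" and "h \<in> O[F](g)"
  shows "(f :: _ \<Rightarrow> real) \<in> O[F](g)"
proof (rule landau_o.big_trans[OF landau_o.big_mono assms(2)])
  show "eventually (\<lambda>x. norm (f x) \<le> norm (h x)) F"
    using assms(1) by eventually_elim auto
qed

lemma two_powr_log_affine:
  assumes "x > 0" and "y > 0"
  shows "2 powr (c * log 2 x + (A * log 2 y + K) / m) = x powr c * y powr (A / m) * 2 powr (K / m)"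
proof -
  have "2 powr (c * log 2 x) = (2 powr log 2 x) powr c"
    by (simp add: powr_powr mult.commute)
  then have x: "2 powr (c * log 2 x) = x powr c" using assms(1) by simp
  have "2 powr (A * log 2 y / m) = (2 powr log 2 y) powr (A / m)"
    by (simp add: powr_powr mult.commute)
  then have y: "2 powr (A * log 2 y / m) = y powr (A / m)" using assms(2) by simp
  show ?thesis by (simp add: add_divide_distrib powr_add x y)
qed

locale nef_anticanonical_fan = smooth_complete_fan nv Smax
    for nv :: "'r::finite \<Rightarrow> int^'d" and Smax :: "'r set set" +
  assumes antican_globally_generated: "antican_globally_generated nv Smax"
begin

lemma XD0_ge_dyadic:
  assumes "\<sigma> \<in> Smax" and "X \<in> dyadic_box k"
  shows "2 powr real_of_int (dot (a_coef nv \<sigma>) k) \<le> XD0 nv \<sigma> X"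
proof -
  have "(\<Sum>\<rho>\<in>UNIV. max 0 (- a_coef nv \<sigma> \<rho>)) = 0"
    using antican_globally_generated assms(1) unfolding antican_globally_generated_def
    by (intro sum.neutral ballI max_absorb1) simp
  then show ?thesis
    using monomial_ge_dyadic[OF assms(2), of "a_coef nv \<sigma>"] by (simp add: XD0_def monomial_def)
qed

lemma Acal_dyadic_exponents:
  assumes "X \<in> Acal nv Smax B"
  shows "B > 0" and "\<forall>\<sigma>\<in>Smax. real_of_int (dot (a_coef nv \<sigma>) (\<lambda>\<rho>. floor_log (X \<rho>))) \<le> log 2 B"
proof -
  have X1: "\<And>\<rho>. X \<rho> \<ge> 1" using assms by (simp add: Acal_def)
  have max_le: "(MAX \<sigma>\<in>Smax. XD0 nv \<sigma> X) \<le> B" using assms by (simp add: Acal_def)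
  have le_B: "XD0 nv \<sigma> X \<le> B" if "\<sigma> \<in> Smax" for \<sigma>
  proof -
    have "XD0 nv \<sigma> X \<le> (MAX \<sigma>\<in>Smax. XD0 nv \<sigma> X)"
      using that finite_Smax by (intro Max_ge) auto
    with max_le show ?thesis by linarith
  qed
  have pos: "XD0 nv \<sigma> X > 0" for \<sigma>
    unfolding XD0_def using X1 by (intro prod_pos) (simp add: Suc_le_eq)
  obtain \<sigma> where "\<sigma> \<in> Smax" using Smax_nonempty by blast
  with le_B pos show "B > 0" by (meson less_le_trans)
  show "\<forall>\<sigma>\<in>Smax. real_of_int (dot (a_coef nv \<sigma>) (\<lambda>\<rho>. floor_log (X \<rho>))) \<le> log 2 B"
  proof
    fix \<sigma> assume "\<sigma> \<in> Smax"
    with XD0_ge_dyadic[OF _ mem_dyadic_box_floor_log[OF X1]] le_B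
    have "2 powr real_of_int (dot (a_coef nv \<sigma>) (\<lambda>\<rho>. floor_log (X \<rho>))) \<le> B"
      by (meson order.trans)
    with \<open>B > 0\<close> show "real_of_int (dot (a_coef nv \<sigma>) (\<lambda>\<rho>. floor_log (X \<rho>))) \<le> log 2 B"
      by (simp add: le_log_iff)
  qed
qed

lemma finite_Acal: "finite (Acal nv Smax B)"
proof (rule finite_subset)
  show "Acal nv Smax B \<subseteq> (\<Union>k\<in>{k. \<forall>\<rho>. k \<rho> \<le> nat \<lfloor>log 2 B\<rfloor>}. dyadic_box k)"
  proof
    fix X assume X: "X \<in> Acal nv Smax B"
    then have "X \<in> dyadic_box (\<lambda>\<rho>. floor_log (X \<rho>))"
      by (intro mem_dyadic_box_floor_log) (simp add: Acal_def)
    moreover have "floor_log (X \<rho>) \<le> nat \<lfloor>log 2 B\<rfloor>" for \<rho>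
      using exponent_le_height[OF Acal_dyadic_exponents(2)[OF X]] .
    ultimately show "X \<in> (\<Union>k\<in>{k. \<forall>\<rho>. k \<rho> \<le> nat \<lfloor>log 2 B\<rfloor>}. dyadic_box k)" by blast
  qed
qed (simp add: finite_bounded_funs finite_dyadic_box)

lemma card_small_XE_le:
  assumes "\<sigma> \<in> Smax" and "L > 0"
  shows "real (card {X \<in> Acal nv Smax B. XE nv \<sigma> \<rho>' X < L})
    \<le> (\<Sum>k\<in>bad_exponents nv Smax \<sigma> \<rho>' (log 2 B) (log 2 L + real_of_int (\<Sum>\<rho>\<in>UNIV. max 0 (- E_coef nv \<sigma> \<rho>' \<rho>))). 2 ^ sum k UNIV)"
proof -
  define C0 where "C0 = real_of_int (\<Sum>\<rho>\<in>UNIV. max 0 (- E_coef nv \<sigma> \<rho>' \<rho>))"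
  let ?K = "bad_exponents nv Smax \<sigma> \<rho>' (log 2 B) (log 2 L + C0)"
  have "{X \<in> Acal nv Smax B. XE nv \<sigma> \<rho>' X < L} \<subseteq> (\<Union>k\<in>?K. dyadic_box k)"
  proof clarify
    fix X assume X: "X \<in> Acal nv Smax B" and small: "XE nv \<sigma> \<rho>' X < L"
    define k where "k = (\<lambda>\<rho>. floor_log (X \<rho>))"
    have X1: "\<And>\<rho>. X \<rho> \<ge> 1" using X by (simp add: Acal_def)
    have box: "X \<in> dyadic_box k"
      unfolding k_def by (rule mem_dyadic_box_floor_log[OF X1])
    have "XE nv \<sigma> \<rho>' X = monomial (E_coef nv \<sigma> \<rho>') X"
      by (rule XE_eq_monomial) (rule X1)
    then have "2 powr real_of_int (dot (E_coef nv \<sigma> \<rho>') k - (\<Sum>\<rho>\<in>UNIV. max 0 (- E_coef nv \<sigma> \<rho>' \<rho>))) < L"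
      using monomial_ge_dyadic[OF box, of "E_coef nv \<sigma> \<rho>'"] small by simp
    then have "real_of_int (dot (E_coef nv \<sigma> \<rho>') k - (\<Sum>\<rho>\<in>UNIV. max 0 (- E_coef nv \<sigma> \<rho>' \<rho>))) < log 2 L"
      using \<open>L > 0\<close> by (subst less_log_iff) auto
    then have "real_of_int (dot (E_coef nv \<sigma> \<rho>') k) < log 2 L + C0"
      unfolding C0_def by (simp only: of_int_diff)
    then have "k \<in> ?K"
      using Acal_dyadic_exponents(2)[OF X] by (simp add: bad_exponents_def k_def)
    with box show "X \<in> (\<Union>k\<in>?K. dyadic_box k)" by blast
  qed
  then have "card {X \<in> Acal nv Smax B. XE nv \<sigma> \<rho>' X < L} \<le> card (\<Union>k\<in>?K. dyadic_box k)"
    by (rule card_mono[rotated]) (simp add: finite_bad_exponents finite_dyadic_box)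
  also have "\<dots> \<le> (\<Sum>k\<in>?K. card (dyadic_box k))"
    by (rule card_UN_le[OF finite_bad_exponents])
  finally have "real (card {X \<in> Acal nv Smax B. XE nv \<sigma> \<rho>' X < L}) \<le> real (\<Sum>k\<in>?K. 2 ^ sum k UNIV)"
    unfolding card_dyadic_box by (rule of_nat_mono)
  then show ?thesis by (simp add: C0_def)
qed

lemma card_small_XE_le_log:
  assumes "\<sigma> \<in> Smax" and "B > 1"
  shows "real (card {X \<in> Acal nv Smax B. XE nv \<sigma> \<rho>' X < ln B powr A})
    \<le> (\<Sum>k\<in>bad_exponents nv Smax \<sigma> \<rho>' (log 2 B) (A * log 2 (ln B) + real_of_int (\<Sum>\<rho>\<in>UNIV. max 0 (- E_coef nv \<sigma> \<rho>' \<rho>))). 2 ^ sum k UNIV)"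
  using card_small_XE_le[OF assms(1), where L = "ln B powr A"] assms(2) by (simp add: log_powr)

lemma card_small_XE_bigo_nondegenerate:
  assumes \<sigma>: "\<sigma> \<in> Smax" and \<rho>': "\<rho>' \<in> \<sigma>" and "A \<ge> 0"
    and minor: "a_coef nv \<sigma> i * E_coef nv \<sigma> \<rho>' j \<noteq> a_coef nv \<sigma> j * E_coef nv \<sigma> \<rho>' i"
  shows "(\<lambda>B. real (card {X \<in> Acal nv Smax B. XE nv \<sigma> \<rho>' X < ln B powr A}))
    \<in> O[at_top](\<lambda>B. B * ln B powr (real (pic_rank nv) - 2) * ln (ln B))"
proof -
  define C0 where "C0 = real_of_int (\<Sum>\<rho>\<in>UNIV. max 0 (- E_coef nv \<sigma> \<rho>' \<rho>))"
  define C where "C = real_of_int (\<Sum>\<rho>\<in>UNIV. \<bar>E_coef nv \<sigma> \<rho>' \<rho>\<bar>)"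
  define p where "p = pic_rank nv - 2"
  note ij = minor_indices[OF \<sigma> minor]
  have "2 \<le> card (UNIV - \<sigma>)"
    using ij card_mono[of "UNIV - \<sigma>" "{i, j}"] by auto
  then have p: "real p = real (pic_rank nv) - 2"
    using card_max_cone[OF \<sigma>] by (simp add: p_def pic_rank_def card_Diff_subset)
  have "eventually (\<lambda>B. 0 \<le> real (card {X \<in> Acal nv Smax B. XE nv \<sigma> \<rho>' X < ln B powr A}) \<and>
      real (card {X \<in> Acal nv Smax B. XE nv \<sigma> \<rho>' X < ln B powr A})
        \<le> (A * log 2 (ln B) + (C0 + C + 1)) * (2 * 4 ^ CARD('r)) * ((log 2 B + 1) ^ p * 2 powr (log 2 B + 1)))
    at_top"
    using eventually_ge_at_top[of "exp 1"]
  proof eventually_elim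
    case (elim B)
    then have "B > 1" using exp_gt_one[of 1] by linarith
    with elim have "ln B \<ge> 1" by (subst ln_ge_iff) auto
    have "log 2 B \<ge> 0" using \<open>B > 1\<close> by simp
    have L0: "A * log 2 (ln B) + C0 \<ge> 0"
      using \<open>A \<ge> 0\<close> \<open>ln B \<ge> 1\<close> by (simp add: C0_def sum_nonneg)
    have "real (card {X \<in> Acal nv Smax B. XE nv \<sigma> \<rho>' X < ln B powr A})
        \<le> (\<Sum>k\<in>bad_exponents nv Smax \<sigma> \<rho>' (log 2 B) (A * log 2 (ln B) + C0). 2 ^ sum k UNIV)"
      unfolding C0_def by (rule card_small_XE_le_log[OF \<sigma> \<open>B > 1\<close>])
    also have "\<dots> \<le> (A * log 2 (ln B) + C0 + C + 1) * (2 * 4 ^ CARD('r)) * ((log 2 B + 1) ^ p * 2 powr (log 2 B + 1))"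
      unfolding C_def p_def by (rule sum_bad_exponents_le_nondegenerate[OF \<sigma> \<rho>' minor L0 \<open>log 2 B \<ge> 0\<close>])
    finally show ?case by (simp add: add.assoc)
  qed
  moreover have "(\<lambda>B. (A * log 2 (ln B) + (C0 + C + 1)) * (2 * 4 ^ CARD('r)) * ((log 2 B + 1) ^ p * 2 powr (log 2 B + 1)))
      \<in> O[at_top](\<lambda>B. B * ln B powr real p * ln (ln B))"
    by (rule bigo_nondegenerate_bound)
  ultimately show ?thesis unfolding p by (rule bigoI_eventually_le)
qed

lemma card_small_XE_bigo_degenerate:
  assumes \<sigma>: "\<sigma> \<in> Smax" and "A \<ge> 0"
    and \<mu>: "\<mu> > 0" and proportional: "\<And>\<rho>. real_of_int (E_coef nv \<sigma> \<rho>' \<rho>) = \<mu> * real_of_int (a_coef nv \<sigma> \<rho>)"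
  shows "(\<lambda>B. real (card {X \<in> Acal nv Smax B. XE nv \<sigma> \<rho>' X < ln B powr A}))
    \<in> O[at_top](\<lambda>B. B * ln B powr q * ln (ln B))"
proof -
  define C0 where "C0 = real_of_int (\<Sum>\<rho>\<in>UNIV. max 0 (- E_coef nv \<sigma> \<rho>' \<rho>))"
  define \<alpha> where "\<alpha> = 1 + (\<Sum>\<rho>\<in>UNIV. \<bar>a_coef nv \<sigma> \<rho>\<bar>)"
  have "a_coef nv \<sigma> \<rho> \<le> \<alpha>" for \<rho>
    using abs_ge_self[of "a_coef nv \<sigma> \<rho>"] member_le_sum[of \<rho> UNIV "\<lambda>\<rho>. \<bar>a_coef nv \<sigma> \<rho>\<bar>"]
    unfolding \<alpha>_def by simp
  moreover have "\<alpha> \<ge> 1" unfolding \<alpha>_def by (simp add: sum_nonneg)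
  ultimately have \<alpha>: "\<alpha> \<ge> 1" "\<And>\<rho>. a_coef nv \<sigma> \<rho> \<le> \<alpha>" by blast+
  have "eventually (\<lambda>B. 0 \<le> real (card {X \<in> Acal nv Smax B. XE nv \<sigma> \<rho>' X < ln B powr A}) \<and>
      real (card {X \<in> Acal nv Smax B. XE nv \<sigma> \<rho>' X < ln B powr A})
        \<le> (log 2 B + 1) ^ CARD('r) * (B powr (1 - 1 / \<alpha>) * ln B powr (A / (\<mu> * \<alpha>)) * 2 powr (C0 / (\<mu> * \<alpha>))))
    at_top"
    using eventually_ge_at_top[of "exp 1"]
  proof eventually_elim
    case (elim B)
    then have "B > 1" using exp_gt_one[of 1] by linarith
    with elim have "ln B \<ge> 1" by (subst ln_ge_iff) auto
    have "log 2 B \<ge> 0" using \<open>B > 1\<close> by simp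
    have "real (card {X \<in> Acal nv Smax B. XE nv \<sigma> \<rho>' X < ln B powr A})
        \<le> (\<Sum>k\<in>bad_exponents nv Smax \<sigma> \<rho>' (log 2 B) (A * log 2 (ln B) + C0). 2 ^ sum k UNIV)"
      unfolding C0_def by (rule card_small_XE_le_log[OF \<sigma> \<open>B > 1\<close>])
    also have "\<dots> \<le> (log 2 B + 1) ^ CARD('r) * 2 powr ((1 - 1 / \<alpha>) * log 2 B + (A * log 2 (ln B) + C0) / (\<mu> * \<alpha>))"
      by (rule sum_bad_exponents_le_degenerate[OF \<sigma> \<mu> proportional \<alpha> \<open>log 2 B \<ge> 0\<close>])
    also have "\<dots> = (log 2 B + 1) ^ CARD('r) * (B powr (1 - 1 / \<alpha>) * ln B powr (A / (\<mu> * \<alpha>)) * 2 powr (C0 / (\<mu> * \<alpha>)))"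
      using two_powr_log_affine[of B "ln B" "1 - 1 / \<alpha>" A C0 "\<mu> * \<alpha>"] \<open>B > 1\<close> \<open>ln B \<ge> 1\<close> by simp
    finally show ?case by simp
  qed
  moreover have "1 / real_of_int \<alpha> > 0" using \<alpha>(1) by simp
  then have "(\<lambda>B. (log 2 B + 1) ^ CARD('r) * (B powr (1 - 1 / \<alpha>) * ln B powr (A / (\<mu> * \<alpha>)) * 2 powr (C0 / (\<mu> * \<alpha>))))
      \<in> O[at_top](\<lambda>B. B * ln B powr q * ln (ln B))"
    by (rule bigo_degenerate_bound)
  ultimately show ?thesis by (rule bigoI_eventually_le)
qed

lemma card_small_XE_bigo:
  assumes "\<sigma> \<in> Smax" and "\<rho>' \<in> \<sigma>" and "A \<ge> 0"
  shows "(\<lambda>B. real (card {X \<in> Acal nv Smax B. XE nv \<sigma> \<rho>' X < ln B powr A}))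
    \<in> O[at_top](\<lambda>B. B * ln B powr (real (pic_rank nv) - 2) * ln (ln B))"
  using E_coef_minor_or_proportional[OF assms(1,2)]
    card_small_XE_bigo_nondegenerate[OF assms] card_small_XE_bigo_degenerate[OF assms(1,3)]
  by blast

lemma card_Acal_diff_Aflat_le:
  "real (card (Acal nv Smax B - Aflat nv Smax A B))
    \<le> (\<Sum>(\<sigma>, \<rho>')\<in>Sigma Smax (\<lambda>\<sigma>. \<sigma>). real (card {X \<in> Acal nv Smax B. XE nv \<sigma> \<rho>' X < ln B powr A}))"
proof -
  let ?P = "Sigma Smax (\<lambda>\<sigma>. \<sigma>)"
  let ?small = "\<lambda>(\<sigma>, \<rho>'). {X \<in> Acal nv Smax B. XE nv \<sigma> \<rho>' X < ln B powr A}"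
  have fin_P: "finite ?P" by (rule finite_subset[of _ UNIV]) auto
  have "Acal nv Smax B - Aflat nv Smax A B \<subseteq> (\<Union>p\<in>?P. ?small p)"
    unfolding Aflat_def by (auto simp: not_le)
  then have "card (Acal nv Smax B - Aflat nv Smax A B) \<le> card (\<Union>p\<in>?P. ?small p)"
    by (rule card_mono[rotated]) (use fin_P finite_Acal in auto)
  also have "\<dots> \<le> (\<Sum>p\<in>?P. card (?small p))"
    by (rule card_UN_le[OF fin_P])
  finally show ?thesis
    by (simp add: split_def flip: of_nat_sum)
qed

end

theorem theorem5p1:
  fixes nv :: "'r::finite \<Rightarrow> int^'d" and Smax :: "'r set set" and A :: real
  assumes "complete_regular_fan nv Smax"
    and "projective_fan nv Smax"
    and "antican_globally_generated nv Smax"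
    and "A > 0"
  shows "(\<forall>B. finite (Acal nv Smax B - Aflat nv Smax A B)) \<and>
    (\<lambda>B. real (card (Acal nv Smax B - Aflat nv Smax A B)))
      \<in> O[at_top](\<lambda>B. B * ln B powr (real (pic_rank nv) - 2) * ln (ln B))"
proof -
  interpret nef_anticanonical_fan nv Smax
    using assms(1,3) by unfold_locales
  have "(\<lambda>B. \<Sum>(\<sigma>, \<rho>')\<in>Sigma Smax (\<lambda>\<sigma>. \<sigma>). real (card {X \<in> Acal nv Smax B. XE nv \<sigma> \<rho>' X < ln B powr A}))
      \<in> O[at_top](\<lambda>B. B * ln B powr (real (pic_rank nv) - 2) * ln (ln B))"
    using card_small_XE_bigo \<open>A > 0\<close> by (intro big_sum_in_bigo) auto
  then have "(\<lambda>B. real (card (Acal nv Smax B - Aflat nv Smax A B)))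
      \<in> O[at_top](\<lambda>B. B * ln B powr (real (pic_rank nv) - 2) * ln (ln B))"
    by (rule bigoI_eventually_le[rotated]) (simp add: card_Acal_diff_Aflat_le)
  with finite_Acal show ?thesis by blast
qed

end
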